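(* For integers $n\ge2$ and $1\le l\le\lfloor n/2\rfloor$, $$p^{(H)}_n(l,n-l)=\Big(\tfrac1{\sqrt2}\Big)^{n-2l+1}(-1)^{n-l}\Big\{P^{0,n-2l}_{l-1}(0)-P^{1,n-2l}_{l-1}(0)\Big\},$$ $$q^{(H)}_n(l,n-l)=\Big(\tfrac1{\sqrt2}\Big)^{n-2l+1}(-1)^{n-l}\Big\{\Big(\frac{n-l}{l}\Big)P^{1,n-2l}_{l-1}(0)-P^{0,n-2l}_{l-1}(0)\Big\}.$$
   Context: For $\min\{l,m\}\ge1$, $n=l+m$: $p^{(H)}_n(l,m)=(1/\sqrt2)^{n-1}\sum_{\gamma=1}^{(l-1)\wedge m}(-1)^{m-\gamma}\binom{l-1}{\gamma}\binom{m-1}{\gamma-1}$ and $q^{(H)}_n(l,m)=(1/\sqrt2)^{n-1}\sum_{\gamma=1}^{l\wedge(m-1)}(-1)^{m-\gamma-1}\binom{l-1}{\gamma-1}\binom{m-1}{\gamma}$ (empty sums are $0$). $P^{\nu,\mu}_k(x)$ is the Jacobi polynomial, orthogonal on $[-1,1]$ w.r.t. $(1-x)^\nu(1+x)^\mu$, normalized by $P^{\nu,\mu}_k(x)=\frac{\Gamma(k+\nu+1)}{\Gamma(k+1)\Gamma(\nu+1)}\,{}_2F_1(-k,k+\nu+\mu+1;\nu+1;(1-x)/2)$. *)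

theory Defs
  imports "HOL-Analysis.Analysis"
begin

text \<open>p^(H)_n(l,m), intended for n = l + m and min l m \<ge> 1.\<close>
definition pH :: "nat \<Rightarrow> nat \<Rightarrow> nat \<Rightarrow> real" where
  "pH n l m = (1 / sqrt 2) ^ (n - 1) *
     (\<Sum>\<gamma> = 1..min (l - 1) m. (-1) ^ (m - \<gamma>) * real ((l - 1) choose \<gamma>) * real ((m - 1) choose (\<gamma> - 1)))"

definition qH :: "nat \<Rightarrow> nat \<Rightarrow> nat \<Rightarrow> real" where
  "qH n l m = (1 / sqrt 2) ^ (n - 1) *
     (\<Sum>\<gamma> = 1..min l (m - 1). (-1) ^ (m - \<gamma> - 1) * real ((l - 1) choose (\<gamma> - 1)) * real ((m - 1) choose \<gamma>))"

definition jacobiP :: "real \<Rightarrow> real \<Rightarrow> nat \<Rightarrow> real \<Rightarrow> real" where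
  "jacobiP \<nu> \<mu> k x = Gamma (real k + \<nu> + 1) / (Gamma (real k + 1) * Gamma (\<nu> + 1)) *
     (\<Sum>j = 0..k. pochhammer (- real k) j * pochhammer (real k + \<nu> + \<mu> + 1) j
        / (pochhammer (\<nu> + 1) j * fact j) * ((1 - x) / 2) ^ j)"

end

theory Submission
  imports Defs "HOL-Computational_Algebra.Formal_Power_Series"
begin

(* Proof idea.  Write l = k + 1, n - 2l = a and n - l = M + 1, so that M = a + k.

   (1) The terminating 2F1 series defining P^{nu,a}_k(0) has j-th term
       (-1)^j C(k+nu, k-j) C(k+nu+a+j, j) / 2^j.
   (2) Expanding 2^(k-j) by the binomial theorem, exchanging the sums, applying
       trinomial revision and Chu-Vandermonde with a negative upper index gives
       the classical evaluation
         2^k P^{nu,a}_k(0) = sum_s (-1)^s C(k+nu, k-s) C(a+k, s).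
   (3) For nu = 0 and nu = 1 the coefficients are C(k,s) and C(k+1,s+1); Pascal's
       rule and the absorption identity turn the two combinations of Jacobi values
       in the theorem into sum_s (-1)^s C(k,s+1) C(M,s) and sum_s (-1)^s C(k,s) C(M,s+1).
   (4) Shifting the summation index gamma = s + 1 brings the sums defining
       p^(H)_n(l,m) and q^(H)_n(l,m) into exactly these shapes; the main theorem
       then only matches powers of 1/sqrt 2 and signs. *)

lemma neg_one_power_diff:
  assumes "b \<le> m"
  shows "(-1::real) ^ (m - b) = (-1) ^ m * (-1) ^ b"
proof -
  have "(-1::real) ^ m = (-1) ^ (m - b) * (-1) ^ b"
    using assms by (simp flip: power_add)
  then have "(-1::real) ^ m * (-1) ^ b = (-1) ^ (m - b) * ((-1) ^ b * (-1) ^ b)"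
    by simp
  also have "(-1::real) ^ b * (-1) ^ b = 1"
    by (simp flip: power_add add: mult_2[symmetric])
  finally show ?thesis by simp
qed

section \<open>Pochhammer symbols and Gamma values at integers\<close>

text \<open>Rising factorials at positive and negative integers as quotients of factorials;
  they convert the coefficients of the 2F1 series into binomial coefficients.\<close>
lemma pochhammer_of_nat_Suc: "pochhammer (real c + 1) j = fact (c + j) / fact c"
proof -
  have "pochhammer (1::real) (c + j) = pochhammer 1 c * pochhammer (1 + of_nat c) j"
    by (rule pochhammer_product')
  then have "fact (c + j) = fact c * pochhammer (real c + 1) j"
    by (simp add: pochhammer_fact add.commute)
  then show ?thesis by (simp add: field_simps)
qed

lemma pochhammer_neg_of_nat:
  assumes "j \<le> k"
  shows "pochhammer (- real k) j = (-1) ^ j * fact k / fact (k - j)"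
proof -
  have "pochhammer (- real k) j = (-1) ^ j * pochhammer (real k - of_nat j + 1) j"
    by (rule pochhammer_minus)
  also have "real k - of_nat j + 1 = real (k - j) + 1"
    using assms by (simp add: of_nat_diff)
  also have "pochhammer (real (k - j) + 1) j = fact k / fact (k - j)"
    using pochhammer_of_nat_Suc[of "k - j" j] assms by simp
  finally show ?thesis by simp
qed

lemma Gamma_of_nat_Suc: "Gamma (real c + 1) = fact c"
  using Gamma_fact[of c, where 'a = real] by (simp add: add.commute)

lemma jacobiP_zero_series:
  fixes \<nu> a k :: nat
  shows "jacobiP (real \<nu>) (real a) k 0 =
     (\<Sum>j\<le>k. (-1) ^ j * real ((k + \<nu>) choose (k - j)) * real ((k + \<nu> + a + j) choose j) / 2 ^ j)"
proof -
  define K where "K = k + \<nu>"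
  have prefactor: "Gamma (real k + real \<nu> + 1) / (Gamma (real k + 1) * Gamma (real \<nu> + 1))
      = fact K / (fact k * fact \<nu>)"
    using Gamma_of_nat_Suc[of K] Gamma_of_nat_Suc[of k] Gamma_of_nat_Suc[of \<nu>] by (simp add: K_def)
  have "jacobiP (real \<nu>) (real a) k 0 =
     (\<Sum>j\<le>k. (-1) ^ j * real (K choose (k - j)) * real ((K + a + j) choose j) / 2 ^ j)"
    unfolding jacobiP_def prefactor atMost_atLeast0 sum_distrib_left
  proof (rule sum.cong[OF refl])
    fix j assume "j \<in> {0..k}"
    then have j: "j \<le> k" by simp
    have p1: "pochhammer (- real k) j = (-1) ^ j * fact k / fact (k - j)"
      by (rule pochhammer_neg_of_nat[OF j])
    have p2: "pochhammer (real k + real \<nu> + real a + 1) j = fact (K + a + j) / fact (K + a)"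
      using pochhammer_of_nat_Suc[of "K + a" j] by (simp add: K_def add_ac)
    have p3: "pochhammer (real \<nu> + 1) j = fact (\<nu> + j) / fact \<nu>"
      by (rule pochhammer_of_nat_Suc)
    have "K - (k - j) = \<nu> + j" using j by (simp add: K_def)
    then have b1: "real (K choose (k - j)) = fact K / (fact (k - j) * fact (\<nu> + j))"
      using binomial_fact[of "k - j" K, where 'a = real] by (simp add: K_def)
    have b2: "real ((K + a + j) choose j) = fact (K + a + j) / (fact j * fact (K + a))"
      using binomial_fact[of j "K + a + j", where 'a = real] by simp
    show "fact K / (fact k * fact \<nu>) *
         (pochhammer (- real k) j * pochhammer (real k + real \<nu> + real a + 1) j /
          (pochhammer (real \<nu> + 1) j * fact j) * ((1 - 0) / 2) ^ j) =
         (-1) ^ j * real (K choose (k - j)) * real ((K + a + j) choose j) / 2 ^ j"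
      unfolding p1 p2 p3 b1 b2 by (simp add: field_simps power_divide)
  qed
  then show ?thesis by (simp add: K_def)
qed

section \<open>Binomial identities\<close>

lemma gchoose_neg_of_nat: "(- (real c + 1)) gchoose j = (-1) ^ j * real ((c + j) choose j)"
proof -
  have "(- (real c + 1)) gchoose j = (-1) ^ j * ((real j - (- (real c + 1)) - 1) gchoose j)"
    by (rule gbinomial_negated_upper)
  also have "real j - (- (real c + 1)) - 1 = real (c + j)" by simp
  finally show ?thesis by (simp add: binomial_gbinomial)
qed

text \<open>Chu--Vandermonde with the negative upper index -(D+Q+1).\<close>
lemma alternating_vandermonde:
  fixes D Q r :: nat
  shows "(\<Sum>j\<le>r. (-1) ^ j * real (Q choose (r - j)) * real ((D + Q + j) choose j))
       = (-1) ^ r * real ((D + r) choose r)"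
proof -
  have "(\<Sum>j\<le>r. (-1) ^ j * real (Q choose (r - j)) * real ((D + Q + j) choose j))
     = (\<Sum>j=0..r. ((- (real (D + Q) + 1)) gchoose j) * (real Q gchoose (r - j)))"
    unfolding atMost_atLeast0
  proof (rule sum.cong[OF refl])
    fix j
    have "(- (real (D + Q) + 1)) gchoose j = (-1) ^ j * real ((D + Q + j) choose j)"
      by (rule gchoose_neg_of_nat)
    then show "(-1) ^ j * real (Q choose (r - j)) * real ((D + Q + j) choose j)
        = ((- (real (D + Q) + 1)) gchoose j) * (real Q gchoose (r - j))"
      by (simp add: binomial_gbinomial)
  qed
  also have "\<dots> = ((- (real (D + Q) + 1)) + real Q) gchoose r"
    by (rule gbinomial_Vandermonde)
  also have "(- (real (D + Q) + 1)) + real Q = - (real D + 1)" by simp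
  finally show ?thesis unfolding gchoose_neg_of_nat .
qed

lemma binomial_row_sum_upto:
  assumes "m \<le> k"
  shows "(\<Sum>i\<le>k. real (m choose i)) = 2 ^ m"
proof -
  have "(\<Sum>i\<le>k. real (m choose i)) = (\<Sum>i\<le>m. real (m choose i))"
    by (rule sum.mono_neutral_right) (use assms in auto)
  also have "\<dots> = 2 ^ m"
    by (simp flip: of_nat_sum add: choose_row_sum)
  finally show ?thesis .
qed

text \<open>For fixed i, trinomial revision followed by the alternating Vandermonde identity
  evaluates the inner sum of step (2).\<close>
lemma trinomial_vandermonde:
  fixes i k K a :: nat
  assumes "i \<le> k" and "k \<le> K"
  shows "(\<Sum>j\<le>k. (-1) ^ j * real (K choose (k - j)) * real ((k - j) choose i) * real ((K + a + j) choose j))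
       = real (K choose i) * ((-1) ^ (k - i) * real ((a + k) choose (k - i)))"
proof -
  have "(\<Sum>j\<le>k. (-1) ^ j * real (K choose (k - j)) * real ((k - j) choose i) * real ((K + a + j) choose j))
      = (\<Sum>j\<le>k - i. (-1) ^ j * real (K choose (k - j)) * real ((k - j) choose i) * real ((K + a + j) choose j))"
    by (rule sum.mono_neutral_right) auto
  also have "\<dots> = real (K choose i) *
      (\<Sum>j\<le>k - i. (-1) ^ j * real ((K - i) choose ((k - i) - j)) * real ((a + i + (K - i) + j) choose j))"
    unfolding sum_distrib_left
  proof (rule sum.cong[OF refl])
    fix j assume j: "j \<in> {..k - i}"
    have "(K choose (k - j)) * ((k - j) choose i) = (K choose i) * ((K - i) choose (k - j - i))"
      using choose_mult[of i "k - j" K] j assms by simp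
    moreover have "k - j - i = (k - i) - j" by simp
    ultimately have revision:
      "(K choose (k - j)) * ((k - j) choose i) = (K choose i) * ((K - i) choose ((k - i) - j))"
      by simp
    have shift: "a + i + (K - i) + j = K + a + j" using assms by simp
    show "(-1) ^ j * real (K choose (k - j)) * real ((k - j) choose i) * real ((K + a + j) choose j)
        = real (K choose i) * ((-1) ^ j * real ((K - i) choose ((k - i) - j)) * real ((a + i + (K - i) + j) choose j))"
      using arg_cong[OF revision, of real] unfolding shift of_nat_mult by (simp add: mult_ac)
  qed
  also have "\<dots> = real (K choose i) * ((-1) ^ (k - i) * real ((a + k) choose (k - i)))"
    using alternating_vandermonde[of "K - i" "k - i" "a + i"] assms by simp
  finally show ?thesis .
qed

lemma jacobi_sum_transform:
  fixes k K a :: nat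
  assumes "k \<le> K"
  shows "(\<Sum>j\<le>k. (-1) ^ j * real (K choose (k - j)) * real ((K + a + j) choose j) * 2 ^ (k - j))
       = (\<Sum>s\<le>k. (-1) ^ s * real (K choose (k - s)) * real ((a + k) choose s))"
proof -
  have "(\<Sum>j\<le>k. (-1) ^ j * real (K choose (k - j)) * real ((K + a + j) choose j) * 2 ^ (k - j))
      = (\<Sum>j\<le>k. \<Sum>i\<le>k. (-1) ^ j * real (K choose (k - j)) * real ((k - j) choose i) * real ((K + a + j) choose j))"
    \<comment> \<open>2^(k-j) is the row sum of C(k-j, i) over i \<le> k\<close>
    by (simp add: binomial_row_sum_upto flip: sum_distrib_left sum_distrib_right)
      (simp add: mult_ac)
  also have "\<dots> = (\<Sum>i\<le>k. \<Sum>j\<le>k. (-1) ^ j * real (K choose (k - j)) * real ((k - j) choose i) * real ((K + a + j) choose j))"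
    by (rule sum.swap)
  also have "\<dots> = (\<Sum>i\<le>k. real (K choose i) * ((-1) ^ (k - i) * real ((a + k) choose (k - i))))"
    using assms by (simp add: trinomial_vandermonde)
  also have "\<dots> = (\<Sum>s\<le>k. (-1) ^ s * real (K choose (k - s)) * real ((a + k) choose s))"
    unfolding atMost_atLeast0 by (subst sum.atLeastAtMost_rev) (simp add: mult_ac)
  finally show ?thesis .
qed

section \<open>Jacobi polynomials at the origin\<close>

lemma jacobiP_at_zero:
  fixes \<nu> a k :: nat
  shows "jacobiP (real \<nu>) (real a) k 0 =
     (\<Sum>s\<le>k. (-1) ^ s * real ((k + \<nu>) choose (k - s)) * real ((a + k) choose s)) / 2 ^ k"
proof -
  have "jacobiP (real \<nu>) (real a) k 0 * 2 ^ k
      = (\<Sum>j\<le>k. (-1) ^ j * real ((k + \<nu>) choose (k - j)) * real ((k + \<nu> + a + j) choose j) * 2 ^ (k - j))"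
    unfolding jacobiP_zero_series sum_distrib_right
    by (rule sum.cong[OF refl]) (simp add: power_diff)
  also have "\<dots> = (\<Sum>s\<le>k. (-1) ^ s * real ((k + \<nu>) choose (k - s)) * real ((a + k) choose s))"
    by (rule jacobi_sum_transform) simp
  finally show ?thesis by (simp add: field_simps)
qed

lemma jacobiP0_at_zero:
  "jacobiP 0 (real a) k 0 = (\<Sum>s\<le>k. (-1) ^ s * real (k choose s) * real ((a + k) choose s)) / 2 ^ k"
proof -
  have "(\<Sum>s\<le>k. (-1) ^ s * real ((k + 0) choose (k - s)) * real ((a + k) choose s))
      = (\<Sum>s\<le>k. (-1) ^ s * real (k choose s) * real ((a + k) choose s))"
    by (rule sum.cong) (auto simp: binomial_symmetric[symmetric])
  then show ?thesis
    using jacobiP_at_zero[of 0 a k] by simp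
qed

lemma jacobiP1_at_zero:
  "jacobiP 1 (real a) k 0 = (\<Sum>s\<le>k. (-1) ^ s * real (Suc k choose Suc s) * real ((a + k) choose s)) / 2 ^ k"
proof -
  have "(\<Sum>s\<le>k. (-1) ^ s * real ((k + 1) choose (k - s)) * real ((a + k) choose s))
      = (\<Sum>s\<le>k. (-1) ^ s * real (Suc k choose Suc s) * real ((a + k) choose s))"
  proof (rule sum.cong[OF refl])
    fix s assume "s \<in> {..k}"
    then have "(k + 1) choose (k - s) = (k + 1) choose ((k + 1) - (k - s))"
      by (intro binomial_symmetric) auto
    moreover have "(k + 1) - (k - s) = Suc s" using \<open>s \<in> {..k}\<close> by auto
    ultimately show "(-1) ^ s * real ((k + 1) choose (k - s)) * real ((a + k) choose s)
        = (-1) ^ s * real (Suc k choose Suc s) * real ((a + k) choose s)" by simp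
  qed
  then show ?thesis
    using jacobiP_at_zero[of 1 a k] by simp
qed

text \<open>Step (3), first combination: Pascal's rule.\<close>
lemma jacobiP_difference_at_zero:
  "jacobiP 0 (real a) k 0 - jacobiP 1 (real a) k 0
     = - (\<Sum>s\<le>k. (-1) ^ s * real (k choose Suc s) * real ((a + k) choose s)) / 2 ^ k"
proof -
  have "jacobiP 0 (real a) k 0 - jacobiP 1 (real a) k 0 =
      (\<Sum>s\<le>k. (-1) ^ s * real (k choose s) * real ((a + k) choose s)
        - (-1) ^ s * real (Suc k choose Suc s) * real ((a + k) choose s)) / 2 ^ k"
    unfolding jacobiP0_at_zero jacobiP1_at_zero
    by (simp only: sum_subtractf diff_divide_distrib)
  also have "\<dots> = (\<Sum>s\<le>k. - ((-1) ^ s * real (k choose Suc s) * real ((a + k) choose s))) / 2 ^ k"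
    by (intro arg_cong[where f = "\<lambda>x. x / 2 ^ k"] sum.cong) (simp_all add: algebra_simps)
  finally show ?thesis by (simp add: sum_negf)
qed

text \<open>The absorption identity (k+1) C(k,s) = (s+1) C(k+1,s+1), applied twice.\<close>
lemma binomial_absorption_product:
  "real (Suc M) * real (Suc k choose Suc s) * real (M choose s)
     = real (Suc k) * real (k choose s) * real (Suc M choose Suc s)"
proof -
  have "Suc s * (Suc M * (Suc k choose Suc s) * (M choose s))
      = (Suc s * (Suc k choose Suc s)) * (Suc M * (M choose s))"
    by (simp only: mult_ac)
  also have "\<dots> = (Suc k * (k choose s)) * (Suc s * (Suc M choose Suc s))"
    by (simp only: Suc_times_binomial)
  also have "\<dots> = Suc s * (Suc k * (k choose s) * (Suc M choose Suc s))"
    by (simp only: mult_ac)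
  finally have "Suc M * (Suc k choose Suc s) * (M choose s) = Suc k * (k choose s) * (Suc M choose Suc s)"
    by (simp only: mult_left_cancel[OF Suc_not_Zero])
  then show ?thesis by (simp only: of_nat_mult [symmetric])
qed

text \<open>Step (3), second combination: absorption followed by Pascal's rule.\<close>
lemma jacobiP_weighted_difference_at_zero:
  "real (Suc (a + k)) / real (Suc k) * jacobiP 1 (real a) k 0 - jacobiP 0 (real a) k 0
     = (\<Sum>s\<le>k. (-1) ^ s * real (k choose s) * real ((a + k) choose Suc s)) / 2 ^ k"
proof -
  define r where "r = real (Suc (a + k)) / real (Suc k)"
  have termwise: "r * ((-1) ^ s * real (Suc k choose Suc s) * real ((a + k) choose s))
      - (-1) ^ s * real (k choose s) * real ((a + k) choose s)
      = (-1) ^ s * real (k choose s) * real ((a + k) choose Suc s)" for s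
  proof -
    have absorbed: "r * real (Suc k choose Suc s) * real ((a + k) choose s)
        = real (k choose s) * real (Suc (a + k) choose Suc s)"
      using binomial_absorption_product[of "a + k" k s] unfolding r_def
      by (simp add: field_simps del: binomial_Suc_Suc of_nat_Suc)
    have "r * ((-1) ^ s * real (Suc k choose Suc s) * real ((a + k) choose s))
        - (-1) ^ s * real (k choose s) * real ((a + k) choose s)
        = (-1) ^ s * (r * real (Suc k choose Suc s) * real ((a + k) choose s)
            - real (k choose s) * real ((a + k) choose s))"
      by (simp add: algebra_simps del: binomial_Suc_Suc)
    also have "\<dots> = (-1) ^ s * (real (k choose s) * real (Suc (a + k) choose Suc s)
            - real (k choose s) * real ((a + k) choose s))"
      by (simp only: absorbed)
    also have "\<dots> = (-1) ^ s * real (k choose s) * real ((a + k) choose Suc s)"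
      by (simp add: algebra_simps)
    finally show ?thesis .
  qed
  have "r * jacobiP 1 (real a) k 0 - jacobiP 0 (real a) k 0
      = (\<Sum>s\<le>k. r * ((-1) ^ s * real (Suc k choose Suc s) * real ((a + k) choose s))
          - (-1) ^ s * real (k choose s) * real ((a + k) choose s)) / 2 ^ k"
    unfolding jacobiP0_at_zero jacobiP1_at_zero
    by (simp only: sum_subtractf sum_distrib_left diff_divide_distrib times_divide_eq_right)
  also have "\<dots> = (\<Sum>s\<le>k. (-1) ^ s * real (k choose s) * real ((a + k) choose Suc s)) / 2 ^ k"
    by (simp only: termwise)
  finally show ?thesis unfolding r_def .
qed

section \<open>The sums defining p^(H) and q^(H)\<close>

text \<open>Step (4): with gamma = s + 1 both sums run over s \<le> k, vanishing terms included.\<close>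
lemma pH_shifted:
  "pH n (Suc k) (Suc M) = (1 / sqrt 2) ^ (n - 1) * (-1) ^ M *
     (\<Sum>s\<le>k. (-1) ^ s * real (k choose Suc s) * real (M choose s))"
proof -
  have "(\<Sum>\<gamma> = 1..min k (Suc M). (-1) ^ (Suc M - \<gamma>) * real (k choose \<gamma>) * real (M choose (\<gamma> - 1)))
      = (\<Sum>\<gamma> = Suc 0..Suc k. (-1) ^ (Suc M - \<gamma>) * real (k choose \<gamma>) * real (M choose (\<gamma> - 1)))"
    by (rule sum.mono_neutral_left) auto
  also have "\<dots> = (\<Sum>s = 0..k. (-1) ^ (Suc M - Suc s) * real (k choose Suc s) * real (M choose s))"
    by (subst sum.shift_bounds_cl_Suc_ivl) simp
  also have "\<dots> = (\<Sum>s\<le>k. (-1) ^ M * ((-1) ^ s * real (k choose Suc s) * real (M choose s)))"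
    unfolding atMost_atLeast0
  proof (rule sum.cong[OF refl])
    fix s
    show "(-1) ^ (Suc M - Suc s) * real (k choose Suc s) * real (M choose s)
        = (-1) ^ M * ((-1) ^ s * real (k choose Suc s) * real (M choose s))"
      by (cases "s \<le> M") (simp_all add: neg_one_power_diff)
  qed
  finally show ?thesis
    unfolding pH_def by (simp add: sum_distrib_left mult.assoc)
qed

lemma qH_shifted:
  "qH n (Suc k) (Suc M) = (1 / sqrt 2) ^ (n - 1) * (-1) ^ Suc M *
     (\<Sum>s\<le>k. (-1) ^ s * real (k choose s) * real (M choose Suc s))"
proof -
  have "(\<Sum>\<gamma> = 1..min (Suc k) M. (-1) ^ (M - \<gamma>) * real (k choose (\<gamma> - 1)) * real (M choose \<gamma>))
      = (\<Sum>\<gamma> = Suc 0..Suc k. (-1) ^ (M - \<gamma>) * real (k choose (\<gamma> - 1)) * real (M choose \<gamma>))"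
    by (rule sum.mono_neutral_left) auto
  also have "\<dots> = (\<Sum>s = 0..k. (-1) ^ (M - Suc s) * real (k choose s) * real (M choose Suc s))"
    by (subst sum.shift_bounds_cl_Suc_ivl) simp
  also have "\<dots> = (\<Sum>s\<le>k. (-1) ^ Suc M * ((-1) ^ s * real (k choose s) * real (M choose Suc s)))"
    unfolding atMost_atLeast0
  proof (rule sum.cong[OF refl])
    fix s
    show "(-1) ^ (M - Suc s) * real (k choose s) * real (M choose Suc s)
        = (-1) ^ Suc M * ((-1) ^ s * real (k choose s) * real (M choose Suc s))"
      by (cases "Suc s \<le> M") (simp_all add: neg_one_power_diff binomial_eq_0)
  qed
  finally show ?thesis
    unfolding qH_def by (simp add: sum_distrib_left mult.assoc)
qed

text \<open>For n = 2(k+1) + a the normalising power (1/sqrt 2)^(n-1) splits off the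
  factor 2^-k carried by the Jacobi values.\<close>
lemma inverse_sqrt2_power_split:
  assumes "n = a + 2 * k + 2"
  shows "(1 / sqrt 2) ^ (n - 1) = (1 / sqrt 2) ^ (a + 1) / 2 ^ k"
proof -
  have "(1 / sqrt (2::real)) ^ (2 * k) = 1 / 2 ^ k"
    by (simp add: power_mult power_divide)
  moreover have "n - 1 = 2 * k + (a + 1)" using assms by simp
  ultimately show ?thesis by (simp add: power_add)
qed

lemma pH_jacobi:
  assumes "n = a + 2 * k + 2"
  shows "pH n (Suc k) (Suc (a + k)) = (1 / sqrt 2) ^ (a + 1) * (-1) ^ Suc (a + k) *
           (jacobiP 0 (real a) k 0 - jacobiP 1 (real a) k 0)"
  unfolding pH_shifted jacobiP_difference_at_zero inverse_sqrt2_power_split[OF assms]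
  by simp

lemma qH_jacobi:
  assumes "n = a + 2 * k + 2"
  shows "qH n (Suc k) (Suc (a + k)) = (1 / sqrt 2) ^ (a + 1) * (-1) ^ Suc (a + k) *
           (real (Suc (a + k)) / real (Suc k) * jacobiP 1 (real a) k 0 - jacobiP 0 (real a) k 0)"
  unfolding qH_shifted jacobiP_weighted_difference_at_zero inverse_sqrt2_power_split[OF assms]
  by simp

theorem mainTheorem8:
  fixes n l :: nat
  assumes "n \<ge> 2" and "1 \<le> l" and "l \<le> n div 2"
  shows "pH n l (n - l) = (1 / sqrt 2) ^ (n - 2 * l + 1) * (-1) ^ (n - l) *
           (jacobiP 0 (real (n - 2 * l)) (l - 1) 0 - jacobiP 1 (real (n - 2 * l)) (l - 1) 0) \<and>
         qH n l (n - l) = (1 / sqrt 2) ^ (n - 2 * l + 1) * (-1) ^ (n - l) *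
           ((real (n - l) / real l) * jacobiP 1 (real (n - 2 * l)) (l - 1) 0 - jacobiP 0 (real (n - 2 * l)) (l - 1) 0)"
proof -
  obtain k where l: "l = Suc k" using assms(2) by (cases l) auto
  have "2 * l \<le> n" using assms(3) by linarith
  then obtain a where "n = 2 * l + a"
    using le_Suc_ex by blast
  then have n: "n = a + 2 * k + 2" using l by simp
  have indices: "n - l = Suc (a + k)" "n - 2 * l = a" "l - 1 = k"
    using n l by auto
  show ?thesis
    unfolding indices unfolding l using pH_jacobi[OF n] qH_jacobi[OF n] by blast
qed

end
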